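(* For $s,w>0$ and positive integer $\eta\leq\frac{n}{2}$, there exists an interacting-electronic Hamiltonian $H=T+V=\sum_{j,k}\tau_{j,k}A_j^\dagger A_k+\sum_{l,m}\nu_{l,m}N_lN_m$ with $n$ spin orbitals such that $\|\tau\|=s$, $\|\nu\|_{\max}=w$, \begin{equation} \big\Vert\underbrace{[T,\ldots[T}_{p},V]]\big\Vert_{\eta}=\Omega\left(s^p w\eta\right),\qquad \big\Vert\underbrace{[V,\ldots[V}_{p},T]]\big\Vert_{\eta}=\Omega\left(\left(w\eta\right)^{p} s/n\right). \end{equation} In addition, for $u,w>0$ and positive integer $d\leq \eta\leq\frac{n}{2}$, there exists a $d$-sparse interacting-electronic Hamiltonian $H=T+V=\sum_{j,k}\tau_{j,k}A_j^\dagger A_k+\sum_{l,m}\nu_{l,m}N_lN_m$ with $n$ spin orbitals such that $\|\tau\|_{\max}=u$, $\|\nu\|_{\max}=w$, \begin{equation} \big\Vert\underbrace{[T,\ldots[T}_{p},V]]\big\Vert_{\eta}=\Omega\left(\left(ud\right)^p wd\right),\qquad \big\Vert\underbrace{[V,\ldots[V}_{p},T]]\big\Vert_{\eta}=\Omega\left(\left(wd\right)^p u\right). \end{equation}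
   Context: $A_j^\dagger$, $A_k$ are fermionic creation and annihilation operators on $n$ spin orbitals (modes), $N_l=A_l^\dagger A_l$ are occupation-number operators, and $\tau,\nu$ are $n\times n$ coefficient matrices. $\|\cdot\|$ is the spectral norm and $\|\cdot\|_{\max}$ the largest matrix element in absolute value. The interactions are called $d$-sparse if each row and column of $\tau$ and $\nu$ has at most $d$ nonzero entries. For a number-preserving operator $X$ (one commuting with $N=\sum_j N_j$), the fermionic $\eta$-seminorm is $\|X\|_\eta=\max_{|\psi_\eta\rangle,|\phi_\eta\rangle}|\langle\phi_\eta|X|\psi_\eta\rangle|$, the maximum over normalized states with exactly $\eta$ electrons. $p$ is a positive integer (the number of nested commutator layers). *)

theory Defs
  imports "HOL-Analysis.Analysis"
begin

text \<open>Fock space on n spin orbitals (modes 0..n-1): orthonormal basis |S> indexed by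
  occupied sets S \<subseteq> {..<n}. Operators are represented by their matrix entries
  X S U = <S|X|U>. Jordan-Wigner sign convention: modes ordered by index.\<close>

type_synonym fop = "nat set \<Rightarrow> nat set \<Rightarrow> complex"

definition opmul :: "nat \<Rightarrow> fop \<Rightarrow> fop \<Rightarrow> fop" where
  "opmul n X Y = (\<lambda>S U. \<Sum>R\<in>Pow {..<n}. X S R * Y R U)"

definition comm :: "nat \<Rightarrow> fop \<Rightarrow> fop \<Rightarrow> fop" where
  "comm n X Y = (\<lambda>S U. opmul n X Y S U - opmul n Y X S U)"

fun nested_comm :: "nat \<Rightarrow> nat \<Rightarrow> fop \<Rightarrow> fop \<Rightarrow> fop" where
  "nested_comm n 0 X Y = Y"
| "nested_comm n (Suc p) X Y = comm n X (nested_comm n p X Y)"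

definition cre :: "nat \<Rightarrow> nat \<Rightarrow> fop" where
  "cre n j = (\<lambda>S U. if j < n \<and> U \<subseteq> {..<n} \<and> j \<notin> U \<and> S = insert j U
                     then (-1) ^ card {i\<in>U. i < j} else 0)"

definition ann :: "nat \<Rightarrow> nat \<Rightarrow> fop" where
  "ann n k = (\<lambda>S U. if k < n \<and> U \<subseteq> {..<n} \<and> k \<in> U \<and> S = U - {k}
                     then (-1) ^ card {i\<in>U. i < k} else 0)"

definition numop :: "nat \<Rightarrow> nat \<Rightarrow> fop" where
  "numop n l = opmul n (cre n l) (ann n l)"

definition kinetic :: "nat \<Rightarrow> (nat \<Rightarrow> nat \<Rightarrow> complex) \<Rightarrow> fop" where
  "kinetic n tau = (\<lambda>S U. \<Sum>j<n. \<Sum>k<n. tau j k * opmul n (cre n j) (ann n k) S U)"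

definition potential :: "nat \<Rightarrow> (nat \<Rightarrow> nat \<Rightarrow> complex) \<Rightarrow> fop" where
  "potential n nu = (\<lambda>S U. \<Sum>l<n. \<Sum>m<n. nu l m * opmul n (numop n l) (numop n m) S U)"

definition eta_states :: "nat \<Rightarrow> nat \<Rightarrow> nat set set" where
  "eta_states n eta = {S \<in> Pow {..<n}. card S = eta}"

definition eta_norm :: "nat \<Rightarrow> nat \<Rightarrow> fop \<Rightarrow> real" where
  "eta_norm n eta X = Sup {cmod (\<Sum>S\<in>eta_states n eta. \<Sum>U\<in>eta_states n eta.
        cnj (phi S) * X S U * psi U) | phi psi.
        (\<Sum>S\<in>eta_states n eta. (cmod (phi S))\<^sup>2) = 1 \<and>
        (\<Sum>U\<in>eta_states n eta. (cmod (psi U))\<^sup>2) = 1}"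

definition spec_norm :: "nat \<Rightarrow> (nat \<Rightarrow> nat \<Rightarrow> complex) \<Rightarrow> real" where
  "spec_norm n A = Sup {sqrt (\<Sum>j<n. (cmod (\<Sum>k<n. A j k * y k))\<^sup>2) | y.
        (\<Sum>k<n. (cmod (y k))\<^sup>2) = 1}"

definition max_norm :: "nat \<Rightarrow> (nat \<Rightarrow> nat \<Rightarrow> complex) \<Rightarrow> real" where
  "max_norm n A = Max ((\<lambda>(j, k). cmod (A j k)) ` ({..<n} \<times> {..<n}))"

definition hermitian_mat :: "nat \<Rightarrow> (nat \<Rightarrow> nat \<Rightarrow> complex) \<Rightarrow> bool" where
  "hermitian_mat n A \<longleftrightarrow> (\<forall>j<n. \<forall>k<n. A k j = cnj (A j k))"

definition sparse_mat :: "nat \<Rightarrow> nat \<Rightarrow> (nat \<Rightarrow> nat \<Rightarrow> complex) \<Rightarrow> bool" where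
  "sparse_mat n d A \<longleftrightarrow> (\<forall>j<n. card {k. k < n \<and> A j k \<noteq> 0} \<le> d) \<and>
                         (\<forall>k<n. card {j. j < n \<and> A j k \<noteq> 0} \<le> d)"

end

theory Submission
  imports Defs
begin

(* The lower bounds are witnessed inside a sector where the many-electron problem becomes a
  one-electron one.  Put eta - 1 electrons on core orbitals lying above 2m and one mobile electron on
  one of the orbitals below 2m.  Hopping among the low orbitals and any density-density interaction
  preserve these 2m states, and on them T and V act as the 2m x 2m matrices tau and
  D = diag(a,...,a,0,...,0), a being the interaction energy of the mobile electron on the left half.
  Take tau = u on all links between the two halves (a complete bipartite graph) and let each left
  orbital interact with itself and with r core orbitals, so that a = w (2r + 1).  Then
  [tau,...[tau,D]] is u a (2 m u)^(p-1) times a block sign pattern, whose form between uniform vectors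
  on the halves has size m u a (2 m u)^(p-1), while the (0, m) entry of [D,...[D,tau]] is a^p u.
  Taking m = 1 (the spectral norm of tau is then u) gives the dense bounds, m = ceil(d/2) and
  r = d - 1 the sparse ones. *)

lemma sum_single_support:
  assumes "finite A" "\<And>x. x \<in> A \<Longrightarrow> x \<noteq> a \<Longrightarrow> f x = 0"
  shows "sum f A = (if a \<in> A then f a else 0)"
proof -
  have "sum f A = (\<Sum>x\<in>A. if x = a then f a else 0)"
    using assms(2) by (intro sum.cong) auto
  then show ?thesis using assms(1) by simp
qed

lemma cre_ann_entry:
  "opmul n (cre n j) (ann n k) S U =
    (if j < n \<and> k < n \<and> U \<subseteq> {..<n} \<and> k \<in> U \<and> j \<notin> U - {k} \<and> S = insert j (U - {k})
     then (-1) ^ (card {i\<in>U. i < k} + card {i\<in>U - {k}. i < j}) else 0)"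
proof -
  have "opmul n (cre n j) (ann n k) S U
      = (if U - {k} \<in> Pow {..<n} then cre n j S (U - {k}) * ann n k (U - {k}) U else 0)"
    unfolding opmul_def by (rule sum_single_support) (auto simp: ann_def)
  then show ?thesis by (auto simp: cre_def ann_def power_add)
qed

lemma numop_entry:
  "numop n l S U = (if l < n \<and> U \<subseteq> {..<n} \<and> l \<in> U \<and> S = U then 1 else 0)"
proof -
  have "{i\<in>U - {l}. i < l} = {i\<in>U. i < l}" by auto
  moreover have "l \<in> U \<Longrightarrow> insert l (U - {l}) = U" by auto
  ultimately show ?thesis
    unfolding numop_def cre_ann_entry by (auto simp: power_add[symmetric])
qed

lemma numop_numop_entry:
  "opmul n (numop n l) (numop n q) S U =
    (if l < n \<and> q < n \<and> U \<subseteq> {..<n} \<and> l \<in> U \<and> q \<in> U \<and> S = U then 1 else 0)"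
proof -
  have "opmul n (numop n l) (numop n q) S U
      = (if U \<in> Pow {..<n} then numop n l S U * numop n q U U else 0)"
    unfolding opmul_def by (rule sum_single_support) (auto simp: numop_entry)
  then show ?thesis by (auto simp: numop_entry)
qed

lemma potential_entry:
  "potential n nu S U = (if S = U \<and> U \<subseteq> {..<n} then (\<Sum>l\<in>U. \<Sum>q\<in>U. nu l q) else 0)"
proof (cases "S = U \<and> U \<subseteq> {..<n}")
  case True
  then have "potential n nu S U = (\<Sum>l\<in>{..<n} \<inter> U. \<Sum>q\<in>{..<n} \<inter> U. nu l q)"
    unfolding potential_def numop_numop_entry sum.inter_restrict[OF finite_lessThan]
    by (intro sum.cong refl) (auto intro!: sum.cong)
  moreover have "{..<n} \<inter> U = U" using True by auto
  ultimately show ?thesis using True by simp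
next
  case False
  then show ?thesis unfolding potential_def by (auto simp: numop_numop_entry intro!: sum.neutral)
qed

lemma finite_eta_states: "finite (eta_states n eta)"
  by (rule finite_subset[of _ "Pow {..<n}"]) (auto simp: eta_states_def)

lemma norm_le_one_if_unit_sum:
  assumes "finite A" "x \<in> A" "(\<Sum>y\<in>A. (cmod (f y))\<^sup>2) = 1"
  shows "cmod (f x) \<le> 1"
proof -
  have "(cmod (f x))\<^sup>2 \<le> 1"
    using assms member_le_sum[of x A "\<lambda>y. (cmod (f y))\<^sup>2"] by simp
  then show ?thesis by (simp add: power_le_one_iff)
qed

lemma eta_norm_ge:
  assumes phi: "(\<Sum>S\<in>eta_states n eta. (cmod (phi S))\<^sup>2) = 1"
    and psi: "(\<Sum>U\<in>eta_states n eta. (cmod (psi U))\<^sup>2) = 1"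
  shows "cmod (\<Sum>S\<in>eta_states n eta. \<Sum>U\<in>eta_states n eta. cnj (phi S) * X S U * psi U)
    \<le> eta_norm n eta X"
  unfolding eta_norm_def
proof (rule cSup_upper)
  let ?E = "eta_states n eta"
  show "bdd_above {cmod (\<Sum>S\<in>?E. \<Sum>U\<in>?E. cnj (phi S) * X S U * psi U) | phi psi.
      (\<Sum>S\<in>?E. (cmod (phi S))\<^sup>2) = 1 \<and> (\<Sum>U\<in>?E. (cmod (psi U))\<^sup>2) = 1}"
  proof (rule bdd_aboveI, safe)
    fix phi psi :: "nat set \<Rightarrow> complex"
    assume phi: "(\<Sum>S\<in>?E. (cmod (phi S))\<^sup>2) = 1" and psi: "(\<Sum>U\<in>?E. (cmod (psi U))\<^sup>2) = 1"
    have entry: "cmod (cnj (phi S) * X S U * psi U) \<le> cmod (X S U)" if "S \<in> ?E" "U \<in> ?E" for S U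
    proof -
      have "cmod (phi S) * cmod (X S U) * cmod (psi U) \<le> 1 * cmod (X S U) * 1"
        using norm_le_one_if_unit_sum[OF finite_eta_states that(1) phi]
          norm_le_one_if_unit_sum[OF finite_eta_states that(2) psi]
        by (intro mult_mono) auto
      then show ?thesis by (simp add: norm_mult)
    qed
    have "cmod (\<Sum>S\<in>?E. \<Sum>U\<in>?E. cnj (phi S) * X S U * psi U)
        \<le> (\<Sum>S\<in>?E. \<Sum>U\<in>?E. cmod (cnj (phi S) * X S U * psi U))"
      by (rule order_trans[OF norm_sum]) (intro sum_mono norm_sum)
    also have "\<dots> \<le> (\<Sum>S\<in>?E. \<Sum>U\<in>?E. cmod (X S U))"
      using entry by (intro sum_mono) auto
    finally show "cmod (\<Sum>S\<in>?E. \<Sum>U\<in>?E. cnj (phi S) * X S U * psi U)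
        \<le> (\<Sum>S\<in>?E. \<Sum>U\<in>?E. cmod (X S U))" .
  qed
qed (use phi psi in blast)

type_synonym cmat = "nat \<Rightarrow> nat \<Rightarrow> complex"

definition mat_mul :: "nat \<Rightarrow> cmat \<Rightarrow> cmat \<Rightarrow> cmat" where
  "mat_mul N M M' = (\<lambda>j k. \<Sum>l<N. M j l * M' l k)"

definition mat_comm :: "nat \<Rightarrow> cmat \<Rightarrow> cmat \<Rightarrow> cmat" where
  "mat_comm N M M' = (\<lambda>j k. mat_mul N M M' j k - mat_mul N M' M j k)"

fun mat_nested_comm :: "nat \<Rightarrow> nat \<Rightarrow> cmat \<Rightarrow> cmat \<Rightarrow> cmat" where
  "mat_nested_comm N 0 M M' = M'"
| "mat_nested_comm N (Suc p) M M' = mat_comm N M (mat_nested_comm N p M M')"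

locale one_particle_sector =
  fixes n N :: nat and C :: "nat set"
  assumes N_le_n: "N \<le> n" and core_range: "C \<subseteq> {N..<n}"
begin

definition state :: "nat \<Rightarrow> nat set" where
  "state j = insert j C"

definition sector :: "nat set set" where
  "sector = state ` {..<N}"

definition preserves_sector :: "fop \<Rightarrow> bool" where
  "preserves_sector X \<longleftrightarrow> (\<forall>S U. (S \<in> sector) \<noteq> (U \<in> sector) \<longrightarrow> X S U = 0)"

lemma finite_core: "finite C"
  using core_range finite_subset by blast

lemma state_inj: "inj_on state {..<N}"
  using core_range by (auto simp: inj_on_def state_def)

lemma state_minus: "j < N \<Longrightarrow> state j - {j} = C"
  using core_range by (auto simp: state_def)

lemma mem_state_below: "i \<in> state j \<Longrightarrow> i < N \<Longrightarrow> i = j"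
  using core_range by (auto simp: state_def)

lemma state_in_eta_states: "j < N \<Longrightarrow> state j \<in> eta_states n (Suc (card C))"
  using core_range N_le_n finite_core
  by (auto simp: eta_states_def state_def card_insert_if)

lemma sector_subset_eta_states: "sector \<subseteq> eta_states n (Suc (card C))"
  using state_in_eta_states by (auto simp: sector_def)

lemma mem_sector_iff:
  assumes "j < N" "j \<in> S"
  shows "S \<in> sector \<longleftrightarrow> S - {j} = C"
proof
  assume "S \<in> sector"
  then obtain j' where "j' < N" "S = state j'" by (auto simp: sector_def)
  with assms show "S - {j} = C" using mem_state_below state_minus by blast
next
  assume "S - {j} = C"
  then have "S = state j" using assms by (auto simp: state_def)
  then show "S \<in> sector" using assms by (auto simp: sector_def)
qed

(* No Jordan-Wigner signs occur: every core orbital lies above every mobile one. *)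
lemma cre_ann_state_entry:
  assumes j: "j < N" and k: "k < N" and j': "j' < N" and k': "k' < N"
  shows "opmul n (cre n j) (ann n k) (state j') (state k') = (if j = j' \<and> k = k' then 1 else 0)"
proof (cases "j = j' \<and> k = k'")
  case True
  have no_signs: "{i\<in>state k'. i < k'} = {}" "{i\<in>C. i < j'} = {}"
    using core_range j' k' by (auto simp: state_def)
  have "state k' \<subseteq> {..<n}" "k' \<in> state k'" "j' \<notin> C" "j' < n" "k' < n"
    using core_range N_le_n j' k' by (auto simp: state_def)
  then show ?thesis
    using True state_minus[OF k'] state_def[of j'] by (simp add: cre_ann_entry no_signs)
next
  case False
  have "\<not> (k \<in> state k' \<and> state j' = insert j (state k' - {k}))"
  proof
    assume *: "k \<in> state k' \<and> state j' = insert j (state k' - {k})"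
    then have "k = k'" using mem_state_below k by blast
    with * have "state j' = state j" using state_minus[OF k'] by (simp add: state_def)
    then have "j = j'" using state_inj j j' by (auto simp: inj_on_def)
    with \<open>k = k'\<close> False show False by simp
  qed
  with False show ?thesis by (auto simp: cre_ann_entry)
qed

lemma preserves_sector_cre_ann:
  assumes j: "j < N" and k: "k < N"
  shows "preserves_sector (opmul n (cre n j) (ann n k))"
  unfolding preserves_sector_def
proof (intro allI impI)
  fix S U assume differ: "(S \<in> sector) \<noteq> (U \<in> sector)"
  show "opmul n (cre n j) (ann n k) S U = 0"
  proof (rule ccontr)
    assume "opmul n (cre n j) (ann n k) S U \<noteq> 0"
    then have "k \<in> U" "j \<notin> U - {k}" "S = insert j (U - {k})"
      by (auto simp: cre_ann_entry split: if_splits)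
    then have "S - {j} = U - {k}" "j \<in> S" by auto
    with differ mem_sector_iff[OF j] mem_sector_iff[OF k \<open>k \<in> U\<close>] show False by simp
  qed
qed

lemma preserves_sector_kinetic:
  assumes "\<And>j k. tau j k \<noteq> 0 \<Longrightarrow> j < N \<and> k < N"
  shows "preserves_sector (kinetic n tau)"
  using assms preserves_sector_cre_ann unfolding preserves_sector_def kinetic_def
  by (metis (no_types, lifting) mult_eq_0_iff sum.neutral)

lemma kinetic_state_entry:
  assumes supp: "\<And>j k. tau j k \<noteq> 0 \<Longrightarrow> j < N \<and> k < N" and j': "j' < N" and k': "k' < N"
  shows "kinetic n tau (state j') (state k') = tau j' k'"
proof -
  have "tau j k * opmul n (cre n j) (ann n k) (state j') (state k')
      = (if k = k' then if j = j' then tau j' k' else 0 else 0)" for j k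
  proof (cases "tau j k = 0")
    case False
    then have "j < N" "k < N" using supp by auto
    then show ?thesis using cre_ann_state_entry[OF _ _ j' k'] by auto
  qed auto
  then show ?thesis
    using N_le_n j' k' by (simp add: kinetic_def)
qed

lemma preserves_sector_potential: "preserves_sector (potential n nu)"
  by (auto simp: preserves_sector_def potential_entry)

lemma potential_state_entry:
  "j < N \<Longrightarrow> k < N \<Longrightarrow> potential n nu (state j) (state k) =
    (if j = k then \<Sum>l\<in>state j. \<Sum>q\<in>state j. nu l q else 0)"
  using state_in_eta_states state_inj by (auto simp: potential_entry inj_on_def eta_states_def)

lemma sum_sector:
  assumes "\<And>S. S \<in> A \<Longrightarrow> S \<notin> sector \<Longrightarrow> h S = 0" "finite A" "sector \<subseteq> A"
  shows "(\<Sum>S\<in>A. h S) = (\<Sum>j<N. h (state j))"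
proof -
  have "(\<Sum>S\<in>A. h S) = (\<Sum>S\<in>sector. h S)"
    using assms by (intro sum.mono_neutral_right) auto
  also have "\<dots> = (\<Sum>j<N. h (state j))"
    unfolding sector_def by (rule sum.reindex[OF state_inj, unfolded comp_def])
  finally show ?thesis .
qed

lemma opmul_state_entry:
  assumes "preserves_sector X" "j < N"
  shows "opmul n X Y (state j) (state k) = (\<Sum>l<N. X (state j) (state l) * Y (state l) (state k))"
  unfolding opmul_def using assms sector_subset_eta_states
  by (intro sum_sector) (auto simp: preserves_sector_def sector_def eta_states_def)

lemma preserves_sector_opmul:
  "preserves_sector X \<Longrightarrow> preserves_sector Y \<Longrightarrow> preserves_sector (opmul n X Y)"
  unfolding preserves_sector_def opmul_def
  by (intro allI impI sum.neutral ballI) (metis mult_eq_0_iff)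

lemma preserves_sector_nested_comm:
  assumes "preserves_sector X" "preserves_sector Y"
  shows "preserves_sector (nested_comm n p X Y)"
proof (induction p)
  case (Suc p)
  with assms preserves_sector_opmul show ?case
    by (simp add: preserves_sector_def comm_def)
qed (use assms in simp)

lemma nested_comm_state_entry:
  assumes X: "preserves_sector X" and Y: "preserves_sector Y"
    and M: "\<And>j k. j < N \<Longrightarrow> k < N \<Longrightarrow> X (state j) (state k) = M j k"
    and M': "\<And>j k. j < N \<Longrightarrow> k < N \<Longrightarrow> Y (state j) (state k) = M' j k"
    and "j < N" "k < N"
  shows "nested_comm n p X Y (state j) (state k) = mat_nested_comm N p M M' j k"
  using \<open>j < N\<close> \<open>k < N\<close>
proof (induction p arbitrary: j k)
  case (Suc p)
  note inner = preserves_sector_nested_comm[OF X Y, of p]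
  show ?case
    using Suc by (simp add: comm_def mat_comm_def mat_mul_def opmul_state_entry[OF X]
        opmul_state_entry[OF inner] M)
qed (use M' in simp)

lemma eta_norm_ge_sector:
  assumes f: "(\<Sum>j<N. (cmod (f j))\<^sup>2) = 1" and g: "(\<Sum>k<N. (cmod (g k))\<^sup>2) = 1"
  shows "cmod (\<Sum>j<N. \<Sum>k<N. cnj (f j) * X (state j) (state k) * g k) \<le> eta_norm n (Suc (card C)) X"
proof -
  let ?E = "eta_states n (Suc (card C))"
  define lift :: "(nat \<Rightarrow> complex) \<Rightarrow> nat set \<Rightarrow> complex" where
    "lift h S = (if S \<in> sector then h (the_inv_into {..<N} state S) else 0)" for h S
  have lift_state: "lift h (state j) = h j" if "j < N" for h j
    using that state_inj by (simp add: lift_def sector_def the_inv_into_f_f)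
  have lift_out: "S \<notin> sector \<Longrightarrow> lift h S = 0" for h S
    by (simp add: lift_def)
  have sum_E: "(\<Sum>S\<in>?E. H S) = (\<Sum>j<N. H (state j))" if "\<And>S. S \<notin> sector \<Longrightarrow> H S = 0" for H
    using that finite_eta_states sector_subset_eta_states by (intro sum_sector) auto
  have "cmod (\<Sum>S\<in>?E. \<Sum>U\<in>?E. cnj (lift f S) * X S U * lift g U) \<le> eta_norm n (Suc (card C)) X"
    using f g by (intro eta_norm_ge) (simp_all add: sum_E lift_out lift_state)
  then show ?thesis
    by (simp add: sum_E lift_out lift_state)
qed

end

definition hopping :: "nat \<Rightarrow> real \<Rightarrow> cmat" where
  "hopping m u j k = (if j < 2*m \<and> k < 2*m \<and> (j < m) \<noteq> (k < m) then complex_of_real u else 0)"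

definition left_diag :: "nat \<Rightarrow> complex \<Rightarrow> cmat" where
  "left_diag m a j k = (if j = k \<and> j < m then a else 0)"

definition block_sign :: "nat \<Rightarrow> bool \<Rightarrow> bool \<Rightarrow> complex" where
  "block_sign p b b' = (if even p \<longleftrightarrow> b = b' then (-1) ^ p * (if b then 1 else -1) else 0)"

definition half_vector :: "nat \<Rightarrow> bool \<Rightarrow> nat \<Rightarrow> complex" where
  "half_vector m b j = (if (j < m) = b then complex_of_real (1 / sqrt m) else 0)"

lemma sum_lessThan_double_halves:
  "(\<Sum>l<2*m. F (l < m)) = of_nat m * F True + of_nat m * (F False :: 'a::comm_semiring_1)"
proof -
  have "(\<Sum>l<2*m. F (l < m)) = (\<Sum>l<m. F (l < m)) + (\<Sum>l\<in>{m..<2*m}. F (l < m))"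
    unfolding lessThan_atLeast0 by (rule sum.atLeastLessThan_concat[symmetric]) auto
  also have "\<dots> = (\<Sum>l<m. F True) + (\<Sum>l\<in>{m..<2*m}. F False)"
    by (intro arg_cong2[where f = "(+)"] sum.cong) auto
  finally show ?thesis by simp
qed

lemma half_vector_unit:
  assumes "1 \<le> m"
  shows "(\<Sum>j<2*m. (cmod (half_vector m b j))\<^sup>2) = 1"
proof -
  have "(cmod (complex_of_real (1 / sqrt m)))\<^sup>2 = 1 / real m"
    using assms by (simp add: norm_divide power_divide)
  then have "(\<Sum>j<2*m. (cmod (half_vector m b j))\<^sup>2) = (\<Sum>j<2*m. (if (j < m) = b then 1 / real m else 0))"
    by (intro sum.cong) (auto simp: half_vector_def)
  also have "\<dots> = 1"
    using assms by (subst sum_lessThan_double_halves[where F = "\<lambda>b'. if b' = b then 1 / real m else 0"]) auto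
  finally show ?thesis .
qed

lemma mat_nested_comm_hopping_left_diag:
  assumes "j < 2*m" "k < 2*m"
  shows "mat_nested_comm (2*m) (Suc q) (hopping m u) (left_diag m a) j k
    = of_real u * a * (2 * of_nat m * of_real u) ^ q * block_sign (Suc q) (j < m) (k < m)"
  using assms
proof (induction q arbitrary: j k)
  case 0
  have "mat_nested_comm (2*m) (Suc 0) (hopping m u) (left_diag m a) j k
      = hopping m u j k * (if k < m then a else 0) - (if j < m then a else 0) * hopping m u j k"
    using 0 by (simp add: mat_comm_def mat_mul_def left_diag_def sum_single_support[where a = k]
        sum_single_support[where a = j])
  also have "\<dots> = of_real u * a * (2 * of_nat m * of_real u) ^ 0 * block_sign (Suc 0) (j < m) (k < m)"
    using 0 by (auto simp: hopping_def block_sign_def)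
  finally show ?case by simp
next
  case (Suc q)
  let ?c = "of_real u * a * (2 * of_nat m * of_real u) ^ q"
  define F where "F b = (if (j < m) \<noteq> b then of_real u else 0) * (?c * block_sign (Suc q) b (k < m))" for b
  define G where "G b = ?c * block_sign (Suc q) (j < m) b * (if b \<noteq> (k < m) then of_real u else 0)" for b
  let ?X = "mat_nested_comm (2*m) (Suc q) (hopping m u) (left_diag m a)"
  have "mat_nested_comm (2*m) (Suc (Suc q)) (hopping m u) (left_diag m a) j k
      = (\<Sum>l<2*m. hopping m u j l * ?X l k) - (\<Sum>l<2*m. ?X j l * hopping m u l k)"
    by (simp only: mat_nested_comm.simps(2)[of _ "Suc q"] mat_comm_def mat_mul_def)
  also have "\<dots> = (\<Sum>l<2*m. F (l < m)) - (\<Sum>l<2*m. G (l < m))"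
    using Suc.prems by (intro arg_cong2[where f = "(-)"] sum.cong refl)
      (simp_all add: Suc.IH F_def G_def hopping_def del: mat_nested_comm.simps)
  also have "\<dots> = ?c * (2 * of_nat m * of_real u) * block_sign (Suc (Suc q)) (j < m) (k < m)"
    unfolding sum_lessThan_double_halves unfolding F_def G_def
    by (cases "j < m"; cases "k < m"; cases "even q") (auto simp: block_sign_def algebra_simps)
  finally show ?case by (simp add: algebra_simps)
qed

lemma mat_nested_comm_left_diag_hopping:
  assumes "j < 2*m" "k < 2*m"
  shows "mat_nested_comm (2*m) p (left_diag m a) (hopping m u) j k
    = ((if j < m then a else 0) - (if k < m then a else 0)) ^ p * hopping m u j k"
  using assms
proof (induction p arbitrary: j k)
  case (Suc p)
  then show ?case
    by (simp add: mat_comm_def mat_mul_def left_diag_def sum_single_support[where a = k]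
        sum_single_support[where a = j] algebra_simps)
qed simp

(* The second vector lives on the half where row True of block_sign (Suc q) does not vanish. *)
lemma half_vector_form_hopping_left_diag:
  assumes "1 \<le> m"
  shows "(\<Sum>j<2*m. \<Sum>k<2*m. cnj (half_vector m True j)
      * mat_nested_comm (2*m) (Suc q) (hopping m u) (left_diag m a) j k * half_vector m (odd q) k)
    = - of_nat m * of_real u * a * (2 * of_nat m * of_real u) ^ q * (-1) ^ q"
proof -
  let ?c = "of_real u * a * (2 * of_nat m * of_real u) ^ q"
  have sqrt_sq: "complex_of_real (sqrt m) * complex_of_real (sqrt m) = of_nat m"
    by (simp flip: of_real_mult)
  define H where "H b b' = cnj (half_vector m True (if b then 0 else m)) * (?c * block_sign (Suc q) b b')
    * half_vector m (odd q) (if b' then 0 else m)" for b b'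
  have "(\<Sum>j<2*m. \<Sum>k<2*m. cnj (half_vector m True j)
      * mat_nested_comm (2*m) (Suc q) (hopping m u) (left_diag m a) j k * half_vector m (odd q) k)
      = (\<Sum>j<2*m. \<Sum>k<2*m. H (j < m) (k < m))"
    by (intro sum.cong refl) (simp add: mat_nested_comm_hopping_left_diag H_def half_vector_def
        del: mat_nested_comm.simps)
  also have "\<dots> = of_nat m * (of_nat m * H True True + of_nat m * H True False)
      + of_nat m * (of_nat m * H False True + of_nat m * H False False)"
    by (simp only: sum_lessThan_double_halves[where F = "H _"])
      (rule sum_lessThan_double_halves[where F = "\<lambda>b. of_nat m * H b True + of_nat m * H b False"])
  also have "\<dots> = - of_nat m * ?c * (-1) ^ q"
    using assms by (cases "even q") (auto simp: H_def half_vector_def block_sign_def sqrt_sq)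
  finally show ?thesis by simp
qed

definition interaction :: "nat \<Rightarrow> nat \<Rightarrow> real \<Rightarrow> cmat" where
  "interaction m r w j k =
    (if (j < m \<and> (k = j \<or> k \<in> {2*m..<2*m+r})) \<or> (k < m \<and> j \<in> {2*m..<2*m+r})
     then complex_of_real w else 0)"

lemma interaction_energy:
  assumes j: "j < 2*m" and r: "r \<le> c"
  shows "(\<Sum>l\<in>insert j {2*m..<2*m+c}. \<Sum>q\<in>insert j {2*m..<2*m+c}. interaction m r w l q)
    = (if j < m then complex_of_real (w * (2 * real r + 1)) else 0)"
proof -
  let ?K = "{2*m..<2*m+c}" and ?R = "{2*m..<2*m+r}"
  have count: "(\<Sum>q\<in>?K. if q \<in> ?R then complex_of_real w else 0) = of_nat r * of_real w"
  proof -
    have "(\<Sum>q\<in>?K. if q \<in> ?R then complex_of_real w else 0) = (\<Sum>q\<in>?K \<inter> ?R. complex_of_real w)"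
      by (rule sum.inter_restrict[where g = "\<lambda>_. complex_of_real w", symmetric]) simp
    also have "?K \<inter> ?R = ?R" using r by auto
    finally show ?thesis by simp
  qed
  have row: "(\<Sum>q\<in>?K. interaction m r w j q) = (if j < m then of_nat r * of_real w else 0)"
    and col: "(\<Sum>l\<in>?K. interaction m r w l j) = (if j < m then of_nat r * of_real w else 0)"
    using j by (auto simp: interaction_def count[symmetric] intro!: sum.cong sum.neutral)
  have core: "(\<Sum>l\<in>?K. \<Sum>q\<in>?K. interaction m r w l q) = 0"
    by (intro sum.neutral ballI) (auto simp: interaction_def)
  have "j \<notin> ?K" using j by simp
  then have "(\<Sum>l\<in>insert j ?K. \<Sum>q\<in>insert j ?K. interaction m r w l q)
      = interaction m r w j j + (\<Sum>q\<in>?K. interaction m r w j q)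
        + (\<Sum>l\<in>?K. interaction m r w l j) + (\<Sum>l\<in>?K. \<Sum>q\<in>?K. interaction m r w l q)"
    by (simp add: sum.distrib)
  then show ?thesis
    unfolding row col core by (simp add: interaction_def algebra_simps)
qed

locale bipartite_model = one_particle_sector n "2*m" "{2*m..<2*m+c}" for n m c :: nat +
  assumes m_pos: "1 \<le> m"
begin

lemma kinetic_hopping_state_entry:
  "j < 2*m \<Longrightarrow> k < 2*m \<Longrightarrow> kinetic n (hopping m u) (state j) (state k) = hopping m u j k"
  by (rule kinetic_state_entry) (auto simp: hopping_def split: if_splits)

lemma potential_interaction_state_entry:
  assumes "r \<le> c" "j < 2*m" "k < 2*m"
  shows "potential n (interaction m r w) (state j) (state k)
    = left_diag m (complex_of_real (w * (2 * real r + 1))) j k"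
proof -
  have energy: "(\<Sum>l\<in>state i. \<Sum>q\<in>state i. interaction m r w l q)
      = (if i < m then complex_of_real (w * (2 * real r + 1)) else 0)" if "i < 2*m" for i
    unfolding state_def by (rule interaction_energy) (use assms that in auto)
  show ?thesis
    using assms by (simp add: potential_state_entry left_diag_def energy)
qed

lemma eta_norm_kinetic_potential_ge:
  assumes r: "r \<le> c"
  shows "real m * u * (w * (2 * real r + 1)) * (2 * real m * u) ^ q
    \<le> eta_norm n (Suc c) (nested_comm n (Suc q) (kinetic n (hopping m u)) (potential n (interaction m r w)))"
proof -
  let ?a = "complex_of_real (w * (2 * real r + 1))"
  let ?X = "nested_comm n (Suc q) (kinetic n (hopping m u)) (potential n (interaction m r w))"
  have "?X (state j) (state k) = mat_nested_comm (2*m) (Suc q) (hopping m u) (left_diag m ?a) j k"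
    if "j < 2*m" "k < 2*m" for j k
    using that preserves_sector_potential
    by (intro nested_comm_state_entry preserves_sector_kinetic)
      (auto simp: hopping_def kinetic_hopping_state_entry potential_interaction_state_entry[OF r]
        split: if_splits)
  then have "(\<Sum>j<2*m. \<Sum>k<2*m. cnj (half_vector m True j) * ?X (state j) (state k) * half_vector m (odd q) k)
      = (\<Sum>j<2*m. \<Sum>k<2*m. cnj (half_vector m True j)
          * mat_nested_comm (2*m) (Suc q) (hopping m u) (left_diag m ?a) j k * half_vector m (odd q) k)"
    by (intro sum.cong refl) (simp only: lessThan_iff)
  also have "\<dots> = - of_nat m * of_real u * ?a * (2 * of_nat m * of_real u) ^ q * (-1) ^ q"
    by (rule half_vector_form_hopping_left_diag[OF m_pos])
  finally have "(\<Sum>j<2*m. \<Sum>k<2*m. cnj (half_vector m True j) * ?X (state j) (state k) * half_vector m (odd q) k)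
      = - of_nat m * of_real u * ?a * (2 * of_nat m * of_real u) ^ q * (-1) ^ q" .
  moreover have "real m * u * (w * (2 * real r + 1)) * (2 * real m * u) ^ q
      \<le> cmod (- of_nat m * of_real u * ?a * (2 * of_nat m * of_real u) ^ q * (-1) ^ q)"
  proof -
    have as_real: "- of_nat m * of_real u * ?a * (2 * of_nat m * of_real u) ^ q * (-1) ^ q
        = complex_of_real (- (real m * u * (w * (2 * real r + 1)) * (2 * real m * u) ^ q * (-1) ^ q))"
      by simp
    show ?thesis
      unfolding as_real norm_of_real abs_minus_cancel abs_mult[of _ "(-1) ^ q"] power_abs
      by simp
  qed
  ultimately show ?thesis
    using eta_norm_ge_sector[OF half_vector_unit[OF m_pos, of True]
        half_vector_unit[OF m_pos, of "odd q"], of ?X]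
    by (simp del: nested_comm.simps)
qed

lemma eta_norm_potential_kinetic_ge:
  assumes r: "r \<le> c"
  shows "(w * (2 * real r + 1)) ^ p * u
    \<le> eta_norm n (Suc c) (nested_comm n p (potential n (interaction m r w)) (kinetic n (hopping m u)))"
proof -
  let ?a = "complex_of_real (w * (2 * real r + 1))"
  let ?X = "nested_comm n p (potential n (interaction m r w)) (kinetic n (hopping m u))"
  define e :: "nat \<Rightarrow> nat \<Rightarrow> complex" where "e i j = (if j = i then 1 else 0)" for i j
  have unit: "(\<Sum>j<2*m. (cmod (e i j))\<^sup>2) = 1" if "i < 2*m" for i
    unfolding e_def by (subst sum_single_support[where a = i]) (auto simp: that)
  have "?X (state 0) (state m) = mat_nested_comm (2*m) p (left_diag m ?a) (hopping m u) 0 m"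
    using m_pos preserves_sector_potential
    by (intro nested_comm_state_entry preserves_sector_kinetic)
      (auto simp: hopping_def kinetic_hopping_state_entry potential_interaction_state_entry[OF r]
        split: if_splits)
  also have "\<dots> = complex_of_real ((w * (2 * real r + 1)) ^ p * u)"
    using m_pos by (simp add: mat_nested_comm_left_diag_hopping hopping_def)
  finally have corner: "?X (state 0) (state m) = complex_of_real ((w * (2 * real r + 1)) ^ p * u)" .
  have "(\<Sum>j<2*m. \<Sum>k<2*m. cnj (e 0 j) * ?X (state j) (state k) * e m k) = ?X (state 0) (state m)"
    using m_pos unfolding e_def
    by (simp add: sum_single_support[where a = 0] sum_single_support[where a = m])
  then have "cmod (?X (state 0) (state m)) \<le> eta_norm n (Suc c) ?X"
    using eta_norm_ge_sector[OF unit unit, of 0 m ?X] m_pos by simp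
  then show ?thesis
    unfolding corner norm_of_real by (rule abs_le_D1)
qed

end

lemma max_norm_eqI:
  assumes "\<And>j k. j < n \<Longrightarrow> k < n \<Longrightarrow> cmod (A j k) \<le> x" "j' < n" "k' < n" "cmod (A j' k') = x"
  shows "max_norm n A = x"
  unfolding max_norm_def
proof (rule Max_eqI)
  show "x \<in> (\<lambda>(j, k). cmod (A j k)) ` ({..<n} \<times> {..<n})"
    using assms(2-4) by (auto intro!: image_eqI[where x = "(j', k')"])
qed (use assms(1) in auto)

lemma sparse_mat_if_symmetric:
  assumes "\<And>j k. A k j = A j k" "\<And>j. card {k. k < n \<and> A j k \<noteq> 0} \<le> d"
  shows "sparse_mat n d A"
  unfolding sparse_mat_def using assms by (metis (no_types, lifting) Collect_cong)

lemma hopping_sym: "hopping m u k j = hopping m u j k"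
  unfolding hopping_def by (rule if_cong) auto

lemma interaction_sym: "interaction m r w k j = interaction m r w j k"
  unfolding interaction_def by (rule if_cong) auto

lemma hermitian_hopping: "hermitian_mat n (hopping m u)"
  by (auto simp: hermitian_mat_def hopping_def)

lemma hermitian_interaction: "hermitian_mat n (interaction m r w)"
  unfolding hermitian_mat_def by (subst interaction_sym) (auto simp: interaction_def)

lemma max_norm_hopping:
  assumes "1 \<le> m" "2*m \<le> n" "0 \<le> u"
  shows "max_norm n (hopping m u) = u"
  by (rule max_norm_eqI[where j' = 0 and k' = m]) (use assms in \<open>auto simp: hopping_def\<close>)

lemma max_norm_interaction:
  assumes "1 \<le> m" "0 < n" "0 \<le> w"
  shows "max_norm n (interaction m r w) = w"
  by (rule max_norm_eqI[where j' = 0 and k' = 0]) (use assms in \<open>auto simp: interaction_def\<close>)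

lemma sparse_hopping:
  assumes "m \<le> d"
  shows "sparse_mat n d (hopping m u)"
proof (rule sparse_mat_if_symmetric[OF hopping_sym])
  fix j
  have "{k. k < n \<and> hopping m u j k \<noteq> 0} \<subseteq> (if j < m then {m..<2*m} else {..<m})"
    by (auto simp: hopping_def split: if_splits)
  then have "card {k. k < n \<and> hopping m u j k \<noteq> 0} \<le> card (if j < m then {m..<2*m} else {..<m})"
    by (intro card_mono) auto
  then show "card {k. k < n \<and> hopping m u j k \<noteq> 0} \<le> d"
    using assms by (simp split: if_splits)
qed

lemma sparse_interaction:
  assumes "m \<le> d" "r + 1 \<le> d"
  shows "sparse_mat n d (interaction m r w)"
proof (rule sparse_mat_if_symmetric[OF interaction_sym])
  fix j
  have "{k. k < n \<and> interaction m r w j k \<noteq> 0} \<subseteq> (if j < m then insert j {2*m..<2*m+r} else {..<m})"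
    by (auto simp: interaction_def split: if_splits)
  then have "card {k. k < n \<and> interaction m r w j k \<noteq> 0}
      \<le> card (if j < m then insert j {2*m..<2*m+r} else {..<m})"
    by (intro card_mono) auto
  also have "\<dots> \<le> d"
    using assms by (auto intro: le_trans[OF card_insert_le_m1])
  finally show "card {k. k < n \<and> interaction m r w j k \<noteq> 0} \<le> d" .
qed

lemma spec_norm_hopping_one:
  assumes n: "2 \<le> n" and s: "0 \<le> s"
  shows "spec_norm n (hopping 1 s) = s"
proof -
  have image: "(\<Sum>j<n. (cmod (\<Sum>k<n. hopping 1 s j k * y k))\<^sup>2) = s\<^sup>2 * ((cmod (y 0))\<^sup>2 + (cmod (y 1))\<^sup>2)"
    for y
  proof -
    have row: "(\<Sum>k<n. hopping 1 s j k * y k) = (if j = 0 then of_real s * y 1 else if j = 1 then of_real s * y 0 else 0)"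
      for j
      using n by (auto simp: hopping_def sum_single_support[where a = 0] sum_single_support[where a = 1])
    then have "(\<Sum>j<n. (cmod (\<Sum>k<n. hopping 1 s j k * y k))\<^sup>2) = (\<Sum>j\<in>{0, 1}. (cmod (\<Sum>k<n. hopping 1 s j k * y k))\<^sup>2)"
      using n by (intro sum.mono_neutral_right) auto
    then show ?thesis
      using row by (simp add: norm_mult power_mult_distrib algebra_simps)
  qed
  show ?thesis
    unfolding spec_norm_def
  proof (rule cSup_eq_maximum)
    let ?e0 = "\<lambda>k. if k = 0 then (1::complex) else 0"
    have "(\<Sum>k<n. (cmod (?e0 k))\<^sup>2) = 1"
      using n by (subst sum_single_support[where a = 0]) auto
    then show "s \<in> {sqrt (\<Sum>j<n. (cmod (\<Sum>k<n. hopping 1 s j k * y k))\<^sup>2) | y. (\<Sum>k<n. (cmod (y k))\<^sup>2) = 1}"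
      using s by (intro CollectI exI[of _ ?e0]) (simp only: image, simp)
  next
    fix x assume "x \<in> {sqrt (\<Sum>j<n. (cmod (\<Sum>k<n. hopping 1 s j k * y k))\<^sup>2) | y. (\<Sum>k<n. (cmod (y k))\<^sup>2) = 1}"
    then obtain y where x: "x = sqrt (s\<^sup>2 * ((cmod (y 0))\<^sup>2 + (cmod (y 1))\<^sup>2))"
      and y: "(\<Sum>k<n. (cmod (y k))\<^sup>2) = 1"
      unfolding image by blast
    have "(\<Sum>k\<in>{0, 1}. (cmod (y k))\<^sup>2) \<le> (\<Sum>k<n. (cmod (y k))\<^sup>2)"
      using n by (intro sum_mono2) auto
    then have "s\<^sup>2 * ((cmod (y 0))\<^sup>2 + (cmod (y 1))\<^sup>2) \<le> s\<^sup>2"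
      using y by (simp add: mult_left_le)
    then show "x \<le> s"
      unfolding x using s by (metis real_sqrt_abs real_sqrt_le_mono abs_of_nonneg)
  qed
qed

lemma dense_lower_bounds:
  assumes p: "0 < p" and s: "0 < s" and w: "0 < w" and eta: "1 \<le> eta" "2 * eta \<le> n"
  shows "\<exists>tau nu. hermitian_mat n tau \<and> hermitian_mat n nu \<and>
    spec_norm n tau = s \<and> max_norm n nu = w \<and>
    eta_norm n eta (nested_comm n p (kinetic n tau) (potential n nu)) \<ge> 1/2 * s ^ p * w * real eta \<and>
    eta_norm n eta (nested_comm n p (potential n nu) (kinetic n tau)) \<ge> 1/2 * (w * real eta) ^ p * s / real n"
proof -
  obtain q where q: "p = Suc q" using p by (cases p) auto
  obtain c where c: "eta = Suc c" using eta by (cases eta) auto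
  interpret bipartite_model n 1 c using eta c by unfold_locales auto
  have energy: "w * real eta \<le> w * (2 * real c + 1)" using w c by simp
  have "1/2 * s ^ p * w * real eta \<le> s * (w * (2 * real c + 1)) * (2 * s) ^ q"
  proof -
    have "s * (w * real eta) * s ^ q \<le> s * (w * (2 * real c + 1)) * (2 * s) ^ q"
      using s w energy by (intro mult_mono mult_left_mono power_mono) auto
    moreover have "1/2 * s ^ p * w * real eta = 1/2 * (s * (w * real eta) * s ^ q)"
      using q by (simp add: mult_ac)
    moreover have "0 \<le> s * (w * real eta) * s ^ q" using s w by simp
    ultimately show ?thesis by linarith
  qed
  also have "\<dots> \<le> eta_norm n eta (nested_comm n p (kinetic n (hopping 1 s)) (potential n (interaction 1 c w)))"
    using eta_norm_kinetic_potential_ge[of c s w q] c q by simp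
  finally have TV: "1/2 * s ^ p * w * real eta \<le> \<dots>" .
  have "1/2 * (w * real eta) ^ p * s / real n \<le> (w * real eta) ^ p * s"
    using s w eta by (simp add: field_simps)
  also have "\<dots> \<le> (w * (2 * real c + 1)) ^ p * s"
    using s w energy by (intro mult_right_mono power_mono) auto
  also have "\<dots> \<le> eta_norm n eta (nested_comm n p (potential n (interaction 1 c w)) (kinetic n (hopping 1 s)))"
    using eta_norm_potential_kinetic_ge[of c w p s] c by simp
  finally have VT: "1/2 * (w * real eta) ^ p * s / real n \<le> \<dots>" .
  show ?thesis
    by (intro exI[of _ "hopping 1 s"] exI[of _ "interaction 1 c w"] conjI hermitian_hopping
        hermitian_interaction spec_norm_hopping_one max_norm_interaction TV VT)
      (use s w eta in auto)
qed

lemma sparse_bound_le: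
  fixes u w :: real
  assumes u: "0 \<le> u" and w: "0 \<le> w" and "d \<le> 2 * m" "d \<le> 2 * r + 1"
  shows "1/2 * (u * real d) ^ Suc q * w * real d \<le> real m * u * (w * (2 * real r + 1)) * (2 * real m * u) ^ q"
proof -
  have dm: "real d \<le> 2 * real m" and dr: "real d \<le> 2 * real r + 1"
    using assms(3,4) by simp_all
  have A: "real d * (w * real d) \<le> 2 * real m * (w * (2 * real r + 1))"
    using w dm dr by (intro mult_mono mult_left_mono) auto
  have "u * real d \<le> 2 * real m * u"
    using mult_left_mono[OF dm u] by (simp add: mult_ac)
  then have B: "(u * real d) ^ q \<le> (2 * real m * u) ^ q"
    using u by (intro power_mono) auto
  have "u * (real d * (w * real d)) * (u * real d) ^ q
      \<le> u * (2 * real m * (w * (2 * real r + 1))) * (2 * real m * u) ^ q"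
    using u w by (intro mult_mono[OF mult_left_mono[OF A] B]) auto
  moreover have "1/2 * (u * real d) ^ Suc q * w * real d = 1/2 * (u * (real d * (w * real d)) * (u * real d) ^ q)"
    by (simp add: mult_ac)
  moreover have "real m * u * (w * (2 * real r + 1)) * (2 * real m * u) ^ q
      = 1/2 * (u * (2 * real m * (w * (2 * real r + 1))) * (2 * real m * u) ^ q)"
    by (simp add: mult_ac)
  ultimately show ?thesis by linarith
qed

lemma sparse_lower_bounds:
  assumes p: "0 < p" and u: "0 < u" and w: "0 < w" and d: "1 \<le> d" "d \<le> eta" and n: "2 * eta \<le> n"
  shows "\<exists>tau nu. hermitian_mat n tau \<and> hermitian_mat n nu \<and>
    sparse_mat n d tau \<and> sparse_mat n d nu \<and> max_norm n tau = u \<and> max_norm n nu = w \<and>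
    eta_norm n eta (nested_comm n p (kinetic n tau) (potential n nu)) \<ge> 1/2 * (u * real d) ^ p * w * real d \<and>
    eta_norm n eta (nested_comm n p (potential n nu) (kinetic n tau)) \<ge> 1/2 * (w * real d) ^ p * u"
proof -
  obtain q where q: "p = Suc q" using p by (cases p) auto
  obtain c where c: "eta = Suc c" using d by (cases eta) auto
  \<comment> \<open>m = ceil(d/2) makes hopping rows d-sparse while 2m mobile and eta - 1 core orbitals fit into n\<close>
  define m where "m = (d + 1) div 2"
  define r where "r = d - 1"
  have m: "1 \<le> m" "m \<le> d" "d \<le> 2 * m" "2 * m \<le> d + 1" using d unfolding m_def by auto
  have r: "r \<le> c" "d = r + 1" using d c unfolding r_def by auto
  interpret bipartite_model n m c using m d n c by unfold_locales auto
  have energy: "w * real d \<le> w * (2 * real r + 1)" using w r(2) by simp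
  have "1/2 * (u * real d) ^ p * w * real d \<le> real m * u * (w * (2 * real r + 1)) * (2 * real m * u) ^ q"
    unfolding q using u w m(3) r(2) by (intro sparse_bound_le) auto
  also have "\<dots> \<le> eta_norm n eta (nested_comm n p (kinetic n (hopping m u)) (potential n (interaction m r w)))"
    using eta_norm_kinetic_potential_ge[OF r(1), of u w q] c q by simp
  finally have TV: "1/2 * (u * real d) ^ p * w * real d \<le> \<dots>" .
  have "1/2 * (w * real d) ^ p * u \<le> (w * real d) ^ p * u"
    using u w by simp
  also have "\<dots> \<le> (w * (2 * real r + 1)) ^ p * u"
    using u w energy by (intro mult_right_mono power_mono) auto
  also have "\<dots> \<le> eta_norm n eta (nested_comm n p (potential n (interaction m r w)) (kinetic n (hopping m u)))"
    using eta_norm_potential_kinetic_ge[OF r(1), of w p u] c by simp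
  finally have VT: "1/2 * (w * real d) ^ p * u \<le> \<dots>" .
  show ?thesis
    using m r u w n d
    by (intro exI[of _ "hopping m u"] exI[of _ "interaction m r w"] conjI hermitian_hopping
        hermitian_interaction sparse_hopping sparse_interaction max_norm_hopping max_norm_interaction TV VT)
      simp_all
qed

theorem theorem2:
  fixes p :: nat
  assumes "p \<ge> 1"
  shows "\<exists>c>0.
    (\<forall>(n::nat) (eta::nat) (s::real) (w::real).
       s > 0 \<longrightarrow> w > 0 \<longrightarrow> eta \<ge> 1 \<longrightarrow> 2 * eta \<le> n \<longrightarrow>
       (\<exists>tau nu. hermitian_mat n tau \<and> hermitian_mat n nu \<and>
          spec_norm n tau = s \<and> max_norm n nu = w \<and>
          eta_norm n eta (nested_comm n p (kinetic n tau) (potential n nu))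
            \<ge> c * s ^ p * w * real eta \<and>
          eta_norm n eta (nested_comm n p (potential n nu) (kinetic n tau))
            \<ge> c * (w * real eta) ^ p * s / real n))
  \<and> (\<forall>(n::nat) (eta::nat) (d::nat) (u::real) (w::real).
       u > 0 \<longrightarrow> w > 0 \<longrightarrow> d \<ge> 1 \<longrightarrow> d \<le> eta \<longrightarrow> 2 * eta \<le> n \<longrightarrow>
       (\<exists>tau nu. hermitian_mat n tau \<and> hermitian_mat n nu \<and>
          sparse_mat n d tau \<and> sparse_mat n d nu \<and>
          max_norm n tau = u \<and> max_norm n nu = w \<and>
          eta_norm n eta (nested_comm n p (kinetic n tau) (potential n nu))
            \<ge> c * (u * real d) ^ p * w * real d \<and>
          eta_norm n eta (nested_comm n p (potential n nu) (kinetic n tau))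
            \<ge> c * (w * real d) ^ p * u))"
proof -
  have "0 < p" using assms by simp
  then show ?thesis
    by (intro exI[of _ "1/2"] conjI allI impI dense_lower_bounds sparse_lower_bounds) simp_all
qed

end
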